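(* Let $n,m\ge2$ and $d\ge\max(n,m)-1$. Let $\mathcal U$ be a set of $n$ vectors forming an $(n-1)$-simplex ETF and $\mathcal V$ a set of $m$ vectors forming an $(m-1)$-simplex ETF, all on the unit sphere of $\mathbb R^d$. Let $\mathcal U\cup\mathcal V$ denote the collection of all $n+m$ vectors (concatenation, counted with multiplicity). Then $$\frac{1}{|\mathcal U\cup\mathcal V|\,(|\mathcal U\cup\mathcal V|-1)}\sum_{u\ne v\in\mathcal U\cup\mathcal V}u^\top v=-\frac{1}{n+m-1},$$ where the sum runs over ordered pairs of distinct members of the collection and $|\mathcal U\cup\mathcal V|=n+m$.
   Context: A set of $k$ vectors $W$ on the unit sphere of $\mathbb R^d$ is a $(k-1)$-simplex ETF if $\|w\|_2=1$ for all $w\in W$ and $w^\top w'=-\frac{1}{k-1}$ for all distinct $w,w'\in W$. *)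

theory Defs
  imports "HOL-Analysis.Analysis"
begin

definition simplex_ETF :: "(real^'d) set \<Rightarrow> nat \<Rightarrow> bool" where
  "simplex_ETF W k \<longleftrightarrow> finite W \<and> card W = k \<and> (\<forall>w\<in>W. norm w = 1) \<and>
     (\<forall>w\<in>W. \<forall>w'\<in>W. w \<noteq> w' \<longrightarrow> inner w w' = - 1 / (real k - 1))"

text \<open>The collection U \<union> V counted with multiplicity: the disjoint union U <+> V,
  whose members are mapped back to vectors by vec_of.\<close>
definition vec_of :: "'a + 'a \<Rightarrow> 'a" where
  "vec_of x = case_sum id id x"

end

theory Submission
  imports Defs
begin

text \<open>Expanding the squared norm of the sum of the members of U \<union> V, the off-diagonal
  Gram sum equals the squared norm of that sum minus the number of (unit) vectors.
  The vectors of a simplex ETF sum to zero, by the same expansion applied to the ETF alone,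
  so the off-diagonal sum is -(n + m), and dividing by the (n + m)(n + m - 1) ordered pairs
  gives -1/(n + m - 1).\<close>

lemma sum_offdiag_inner:
  fixes f :: "'i \<Rightarrow> 'a::real_inner"
  assumes "finite A"
  shows "(\<Sum>x\<in>A. \<Sum>y\<in>A - {x}. inner (f x) (f y))
       = (norm (sum f A))\<^sup>2 - (\<Sum>x\<in>A. (norm (f x))\<^sup>2)"
proof -
  have "(\<Sum>x\<in>A. \<Sum>y\<in>A - {x}. inner (f x) (f y))
      = (\<Sum>x\<in>A. (\<Sum>y\<in>A. inner (f x) (f y)) - inner (f x) (f x))"
    using assms by (intro sum.cong) (auto simp: sum_diff1)
  also have "\<dots> = inner (sum f A) (sum f A) - (\<Sum>x\<in>A. inner (f x) (f x))"
    by (simp add: sum_subtractf inner_sum_left inner_sum_right) (rule sum.swap)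
  finally show ?thesis
    by (simp add: power2_norm_eq_inner)
qed

lemma sum_offdiag_inner_unit_sum_eq_0:
  fixes f :: "'i \<Rightarrow> 'a::real_inner"
  assumes "finite A" and "sum f A = 0" and "\<And>x. x \<in> A \<Longrightarrow> norm (f x) = 1"
  shows "(\<Sum>x\<in>A. \<Sum>y\<in>A - {x}. inner (f x) (f y)) = - real (card A)"
  using assms by (simp add: sum_offdiag_inner)

lemma simplex_ETF_sum_eq_0:
  fixes W :: "(real^'d) set"
  assumes "k \<ge> 2" and "simplex_ETF W k"
  shows "sum id W = 0"
proof -
  have fin: "finite W" and card: "card W = k" and unit: "\<And>w. w \<in> W \<Longrightarrow> norm w = 1"
    and gram: "\<And>w w'. w \<in> W \<Longrightarrow> w' \<in> W \<Longrightarrow> w \<noteq> w' \<Longrightarrow> inner w w' = - 1 / (real k - 1)"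
    using assms(2) unfolding simplex_ETF_def by auto
  have "(\<Sum>x\<in>W. \<Sum>y\<in>W - {x}. inner x y) = (\<Sum>x\<in>W. \<Sum>y\<in>W - {x}. - 1 / (real k - 1))"
    using gram by (intro sum.cong) auto
  also have "\<dots> = - real k"
    using fin card assms(1) by (simp add: card_Diff_singleton of_nat_diff)
  finally have "(norm (sum id W))\<^sup>2 - real k = - real k"
    using sum_offdiag_inner[OF fin, of id] unit card by simp
  then show ?thesis
    by simp
qed

lemma sum_vec_of_Plus:
  assumes "finite A" and "finite B"
  shows "sum vec_of (A <+> B) = sum id A + sum id B"
  using assms by (simp add: sum.Plus vec_of_def comp_def)

theorem lemmaC14:
  fixes U V :: "(real^'d) set" and n m :: nat
  assumes "n \<ge> 2" and "m \<ge> 2" and "CARD('d) \<ge> max n m - 1"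
    and "simplex_ETF U n" and "simplex_ETF V m"
  shows "1 / (real (card (U <+> V)) * (real (card (U <+> V)) - 1)) *
           (\<Sum>x\<in>U <+> V. \<Sum>y\<in>(U <+> V) - {x}. inner (vec_of x) (vec_of y))
         = - 1 / (real (n + m) - 1)"
proof -
  have fin: "finite U" "finite V" and card: "card (U <+> V) = n + m"
    and unit: "\<And>x. x \<in> U <+> V \<Longrightarrow> norm (vec_of x) = 1"
    using assms(4,5) by (auto simp: simplex_ETF_def card_Plus vec_of_def)
  have "sum vec_of (U <+> V) = 0"
    using sum_vec_of_Plus[OF fin] simplex_ETF_sum_eq_0[OF assms(1,4)]
      simplex_ETF_sum_eq_0[OF assms(2,5)] by simp
  then have "(\<Sum>x\<in>U <+> V. \<Sum>y\<in>(U <+> V) - {x}. inner (vec_of x) (vec_of y)) = - real (n + m)"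
    using sum_offdiag_inner_unit_sum_eq_0[of "U <+> V" vec_of] fin unit card by simp
  moreover have "real (n + m) \<noteq> 0" "real (n + m) - 1 \<noteq> 0"
    using assms(1,2) by auto
  ultimately show ?thesis
    unfolding card by (simp add: divide_simps)
qed

end
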